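(* Consider the P-SSD algorithm described in the context, executed over an arbitrary, possibly time-varying, sequence of digraphs. Then for each agent $i\in\{1,\dots,M\}$: (a) for all $k\in\mathbb{N}_0$, $C_k^i$ is either zero or has full column rank; (b) for all $k\in\mathbb{N}$, $\mathcal{R}(D_k^iE_k^i)=\mathcal{R}(C_k^i)$; (c) for all $k\in\mathbb{N}$, $\mathcal{R}(D(X_i)C_k^i)=\mathcal{R}(D(Y_i)C_k^i)$.
   Context: Data setting: a map $T:\mathcal{M}\to\mathcal{M}$, $\mathcal{M}\subseteq\mathbb{R}^n$; a dictionary $D(x)=[d_1(x),\dots,d_{N_d}(x)]$ of real-valued functions on $\mathcal{M}$; data matrices $X,Y\in\mathbb{R}^{N\times n}$ whose $i$-th rows $x_i^T,y_i^T$ satisfy $y_i=T(x_i)$; $D(X)\in\mathbb{R}^{N\times N_d}$ is the matrix with rows $D(x_1),\dots,D(x_N)$ (similarly $D(Y)$). Assumption: $D(X)$ and $D(Y)$ have full column rank. There are $M$ agents; agent $i$ holds local dictionary snapshots $D(X_i),D(Y_i)$ (obtained from a subset of the snapshot pairs) such that the union over $i$ of the rows of $[D(X_i),D(Y_i)]$ equals the set of rows of $[D(X),D(Y)]$. There are signature matrices $D(X_s),D(Y_s)$ with full column rank such that the rows of $[D(X_s),D(Y_s)]$ are contained in the rows of $[D(X_i),D(Y_i)]$ for every $i$. SSD algorithm: given $A,B\in\mathbb{R}^{m\times q}$, set $A_1=A$, $B_1=B$, $C=I_q$, and iterate: let $[Z^A_j;Z^B_j]$ be a matrix whose columns form a basis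 of the null space of $[A_j,B_j]$ (with $Z^A_j$ having as many rows as $A_j$ has columns); if the null space is trivial return $0$; if the number of rows of $Z^A_j$ is at most its number of columns, return $C$; otherwise set $C\leftarrow CZ^A_j$, $A_{j+1}=A_jZ^A_j$, $B_{j+1}=B_jZ^A_j$. Its output is denoted $\mathrm{SSD}(A,B)$. P-SSD algorithm: at iteration $k\ge1$ the digraph $G_k$ is used; an edge $(j,i)\in E_k$ means $j$ is an in-neighbor of $i$, and $\mathcal{N}_{\mathrm{in}}^k(i)$ denotes the in-neighbors of $i$ in $G_k$. Each agent $i$ sets $C_0^i=I_{N_d}$, $\mathrm{flag}_0^i=0$, and for $k=1,2,\dots$: receives $C_{k-1}^j$ for $j\in\mathcal{N}_{\mathrm{in}}^k(i)$; sets $D_k^i=\mathrm{basis}\big(\bigcap_{j\in\{i\}\cup\mathcal{N}_{\mathrm{in}}^k(i)}\mathcal{R}(C_{k-1}^j)\big)$; sets $E_k^i=\mathrm{SSD}(D(X_i)D_k^i,D(Y_i)D_k^i)$; if the number of columns of $D_k^iE_k^i$ is strictly less than that of $C_{k-1}^i$, sets $C_k^i=D_k^iE_k^i$ and $\mathrm{flag}_k^i=0$; otherwise sets $C_k^i=C_{k-1}^i$ and $\mathrm{flag}_k^i=1$; then transmits $C_k^i$ to its out-neighbors. Here $\mathrm{basis}(\mathcal{A})$ returns a matrix whose columns form a basis of the subspace $\mathcal{A}$, and returns $0$ if $\mathcal{A}=\{0\}$; the matrix $0$ is regarded as having $0$ columns. $\mathcal{R}(\cdot)$ denotes range space. *)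

theory Defs
  imports "Jordan_Normal_Form.Matrix_Kernel"
begin

definition hcat :: "real mat \<Rightarrow> real mat \<Rightarrow> real mat" where
  "hcat A B = mat (dim_row A) (dim_col A + dim_col B)
     (\<lambda>(i,j). if j < dim_col A then A $$ (i,j) else B $$ (i, j - dim_col A))"

definition top_rows :: "nat \<Rightarrow> real mat \<Rightarrow> real mat" where
  "top_rows p Z = mat p (dim_col Z) (\<lambda>(i,j). Z $$ (i,j))"

definition col_range :: "real mat \<Rightarrow> real vec set" where
  "col_range A = {A *\<^sub>v v | v. v \<in> carrier_vec (dim_col A)}"

definition full_col_rank :: "real mat \<Rightarrow> bool" where
  "full_col_rank A \<longleftrightarrow>
     (\<forall>v \<in> carrier_vec (dim_col A). A *\<^sub>v v = 0\<^sub>v (dim_row A) \<longrightarrow> v = 0\<^sub>v (dim_col A))"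

(* B (with n rows) is a valid output of basis(S): its columns form a basis of S.
   For S = {0} this forces B to have 0 columns, i.e. B is "the matrix 0". *)
definition is_basis_of :: "nat \<Rightarrow> real mat \<Rightarrow> real vec set \<Rightarrow> bool" where
  "is_basis_of n B S \<longleftrightarrow> dim_row B = n \<and> full_col_rank B \<and> col_range B = S"

(* ssd_run A B C Out: starting from A_j = A, B_j = B with accumulated C,
   some execution of the SSD loop (any choice of null-space bases) returns Out. *)
inductive ssd_run :: "real mat \<Rightarrow> real mat \<Rightarrow> real mat \<Rightarrow> real mat \<Rightarrow> bool" where
  trivial: "full_col_rank (hcat A B) \<Longrightarrow> ssd_run A B C (0\<^sub>m (dim_row C) 0)"
| stop: "\<not> full_col_rank (hcat A B) \<Longrightarrow>
         is_basis_of (dim_col A + dim_col B) Z (mat_kernel (hcat A B)) \<Longrightarrow>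
         dim_col A \<le> dim_col Z \<Longrightarrow> ssd_run A B C C"
| step: "\<not> full_col_rank (hcat A B) \<Longrightarrow>
         is_basis_of (dim_col A + dim_col B) Z (mat_kernel (hcat A B)) \<Longrightarrow>
         dim_col Z < dim_col A \<Longrightarrow>
         ssd_run (A * top_rows (dim_col A) Z) (B * top_rows (dim_col A) Z)
                 (C * top_rows (dim_col A) Z) Out \<Longrightarrow>
         ssd_run A B C Out"

definition is_SSD :: "real mat \<Rightarrow> real mat \<Rightarrow> real mat \<Rightarrow> bool" where
  "is_SSD A B E \<longleftrightarrow> ssd_run A B (1\<^sub>m (dim_col A)) E"

definition in_nbrs :: "(nat \<times> nat) set \<Rightarrow> nat \<Rightarrow> nat set" where
  "in_nbrs G i = {j. (j, i) \<in> G}"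

end

theory Submission
  imports Defs
begin

(* Every signature row occurs in each agent's data, so D(X_i) and D(Y_i) inherit full column
   rank from the signature matrices. Through the SSD loop, A_j = A C and B_j = B C with A_j, B_j
   and C of full column rank: the top block of a kernel basis of [A_j, B_j] is injective because
   B_j is. When the loop stops, that top block is square, hence invertible, so every A_j u equals
   some B_j v and the two ranges coincide by dimension. Hence each P-SSD candidate D_k E_k has
   full column rank, lies in R(C_{k-1}) and satisfies (c); when it is not accepted it has at least
   as many columns as C_{k-1}, so its range is all of R(C_{k-1}), which gives (b) and (c) for
   C_k = C_{k-1}. *)

lemma full_col_rankI:
  assumes "A \<in> carrier_mat m n"
    and "\<And>v. v \<in> carrier_vec n \<Longrightarrow> A *\<^sub>v v = 0\<^sub>v m \<Longrightarrow> v = 0\<^sub>v n"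
  shows "full_col_rank A"
  using assms unfolding full_col_rank_def by auto

lemma full_col_rankD:
  assumes "full_col_rank A" and "A \<in> carrier_mat m n"
    and "v \<in> carrier_vec n" and "A *\<^sub>v v = 0\<^sub>v m"
  shows "v = 0\<^sub>v n"
  using assms unfolding full_col_rank_def by auto

lemma mult_mat_vec_zero_vec: "A \<in> carrier_mat m n \<Longrightarrow> A *\<^sub>v 0\<^sub>v n = 0\<^sub>v m"
  by (intro eq_vecI) auto

lemma full_col_rank_zero_cols: "full_col_rank (0\<^sub>m n 0)"
  by (rule full_col_rankI[of _ n 0]) (auto intro: eq_vecI)

lemma full_col_rank_one_mat: "full_col_rank (1\<^sub>m n)"
  by (rule full_col_rankI[of _ n n]) auto

lemma full_col_rank_mult:
  assumes A: "A \<in> carrier_mat m n" and B: "B \<in> carrier_mat n p"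
    and fA: "full_col_rank A" and fB: "full_col_rank B"
  shows "full_col_rank (A * B)"
proof (rule full_col_rankI)
  show "A * B \<in> carrier_mat m p" using A B by simp
  fix v assume v: "v \<in> carrier_vec p" and "A * B *\<^sub>v v = 0\<^sub>v m"
  then have "A *\<^sub>v (B *\<^sub>v v) = 0\<^sub>v m" using A B by simp
  then have "B *\<^sub>v v = 0\<^sub>v n" using full_col_rankD[OF fA A] B v by simp
  then show "v = 0\<^sub>v p" using full_col_rankD[OF fB B v] by simp
qed

lemma full_col_rank_mult_right_factor:
  assumes B: "B \<in> carrier_mat m n" and X: "X \<in> carrier_mat n p"
    and fBX: "full_col_rank (B * X)"
  shows "full_col_rank X"
proof (rule full_col_rankI[OF X])
  fix v assume v: "v \<in> carrier_vec p" and "X *\<^sub>v v = 0\<^sub>v n"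
  then have "B * X *\<^sub>v v = 0\<^sub>v m" using B X mult_mat_vec_zero_vec[OF B] by simp
  then show "v = 0\<^sub>v p" using full_col_rankD[OF fBX mult_carrier_mat[OF B X] v] by simp
qed

lemma full_col_rank_square_surj:
  assumes M: "M \<in> carrier_mat n n" and fM: "full_col_rank M" and w: "w \<in> carrier_vec n"
  obtains v where "v \<in> carrier_vec n" "M *\<^sub>v v = w"
proof -
  have "det M \<noteq> 0"
    using det_0_iff_vec_prod_zero[OF M] full_col_rankD[OF fM M] by auto
  from det_non_zero_imp_unit[OF M this, of "()"]
  obtain B where B: "B \<in> carrier_mat n n" "M * B = 1\<^sub>m n"
    unfolding Units_def ring_mat_def by auto
  have "M *\<^sub>v (B *\<^sub>v w) = w"
    using M B w by (simp flip: assoc_mult_mat_vec)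
  with B w show ?thesis by (intro that[of "B *\<^sub>v w"]) auto
qed

lemma full_col_rank_imp_cols_le:
  assumes A: "A \<in> carrier_mat q p" and fA: "full_col_rank A"
  shows "p \<le> q"
proof (rule ccontr)
  assume "\<not> p \<le> q"
  then have qp: "q < p" by simp
  \<comment> \<open>padding A with zero rows gives a square injective matrix that misses the last unit vector\<close>
  define Y where "Y = A @\<^sub>r 0\<^sub>m (p - q) p"
  have Y: "Y \<in> carrier_mat p p"
    using carrier_append_rows[OF A zero_carrier_mat[of "p - q" p]] qp unfolding Y_def by simp
  have Yv: "Y *\<^sub>v v = (A *\<^sub>v v) @\<^sub>v 0\<^sub>v (p - q)" if v: "v \<in> carrier_vec p" for v
  proof -
    have "0\<^sub>m (p - q) p *\<^sub>v v = 0\<^sub>v (p - q)" using v by (intro eq_vecI) auto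
    then show ?thesis using mat_mult_append[OF A zero_carrier_mat v] unfolding Y_def by simp
  qed
  have "full_col_rank Y"
  proof (rule full_col_rankI[OF Y])
    fix v assume v: "v \<in> carrier_vec p" and "Y *\<^sub>v v = 0\<^sub>v p"
    then have "(A *\<^sub>v v) @\<^sub>v 0\<^sub>v (p - q) = 0\<^sub>v q @\<^sub>v 0\<^sub>v (p - q)"
      using Yv qp by (auto intro!: eq_vecI)
    moreover have "A *\<^sub>v v \<in> carrier_vec q" using A v by simp
    ultimately have "A *\<^sub>v v = 0\<^sub>v q" using append_vec_eq[of "A *\<^sub>v v" q "0\<^sub>v q"] by simp
    then show "v = 0\<^sub>v p" using full_col_rankD[OF fA A v] by simp
  qed
  then obtain v where v: "v \<in> carrier_vec p" "Y *\<^sub>v v = unit_vec p (p - 1)"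
    using full_col_rank_square_surj[OF Y] unit_vec_carrier by metis
  have "(Y *\<^sub>v v) $ (p - 1) = 0" using Yv[OF v(1)] A qp by simp
  then show False using v qp by simp
qed

lemma col_range_mult_subset:
  assumes A: "A \<in> carrier_mat m n" and B: "B \<in> carrier_mat n p"
  shows "col_range (A * B) \<subseteq> col_range A"
proof
  fix x assume "x \<in> col_range (A * B)"
  then obtain v where v: "v \<in> carrier_vec p" "x = A * B *\<^sub>v v"
    using B unfolding col_range_def by auto
  then have "x = A *\<^sub>v (B *\<^sub>v v)" using A B by simp
  moreover have "B *\<^sub>v v \<in> carrier_vec (dim_col A)" using A B v by simp
  ultimately show "x \<in> col_range A" unfolding col_range_def by blast
qed

lemma col_range_subset_imp_factor:
  assumes A: "A \<in> carrier_mat m p" and B: "B \<in> carrier_mat m q"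
    and sub: "col_range A \<subseteq> col_range B"
  obtains X where "X \<in> carrier_mat q p" "A = B * X"
proof -
  have "\<forall>j<p. \<exists>w. w \<in> carrier_vec q \<and> col A j = B *\<^sub>v w"
  proof (intro allI impI)
    fix j assume j: "j < p"
    have "col A j = A *\<^sub>v unit_vec p j" using A j by (intro eq_vecI) auto
    then have "col A j \<in> col_range A" using A unfolding col_range_def by auto
    then have "col A j \<in> col_range B" using sub by blast
    then show "\<exists>w. w \<in> carrier_vec q \<and> col A j = B *\<^sub>v w" using B unfolding col_range_def by auto
  qed
  then obtain W where W: "\<And>j. j < p \<Longrightarrow> W j \<in> carrier_vec q \<and> col A j = B *\<^sub>v W j"
    by metis
  define X where "X = mat q p (\<lambda>(i, j). W j $ i)"
  have X: "X \<in> carrier_mat q p" unfolding X_def by simp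
  have "A = B * X"
  proof (rule mat_col_eqI)
    fix j assume "j < dim_col (B * X)"
    then have j: "j < p" using X by simp
    have "col X j = W j" using W[OF j] j unfolding X_def by (intro eq_vecI) auto
    then show "col A j = col (B * X) j" using W[OF j] col_mult2[OF B X j] by simp
  qed (use A B X in auto)
  with X show ?thesis by (rule that)
qed

lemma col_range_eq_if_subset:
  assumes A: "A \<in> carrier_mat n p" and B: "B \<in> carrier_mat n q"
    and fA: "full_col_rank A" and sub: "col_range A \<subseteq> col_range B" and qp: "q \<le> p"
  shows "col_range A = col_range B"
proof -
  obtain X where X: "X \<in> carrier_mat q p" and AX: "A = B * X"
    using col_range_subset_imp_factor[OF A B sub] .
  have fX: "full_col_rank X" using full_col_rank_mult_right_factor[OF B X] fA AX by simp
  then have "q = p" using full_col_rank_imp_cols_le[OF X] qp by simp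
  then have X': "X \<in> carrier_mat p p" and B': "B \<in> carrier_mat n p" using X B by auto
  have "col_range B \<subseteq> col_range A"
  proof
    fix y assume "y \<in> col_range B"
    then obtain w where w: "w \<in> carrier_vec p" "y = B *\<^sub>v w"
      using B' unfolding col_range_def by auto
    obtain u where u: "u \<in> carrier_vec p" "X *\<^sub>v u = w"
      using full_col_rank_square_surj[OF X' fX w(1)] .
    have "y = A *\<^sub>v u" using w u AX B' X' by simp
    then show "y \<in> col_range A" using u A unfolding col_range_def by auto
  qed
  with sub show ?thesis by blast
qed

lemma col_range_mult_left_cong:
  assumes X: "X \<in> carrier_mat m n" and M: "M \<in> carrier_mat n p" and N: "N \<in> carrier_mat n q"
    and eq: "col_range M = col_range N"
  shows "col_range (X * M) = col_range (X * N)"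
proof -
  have mono: "col_range (X * M') \<subseteq> col_range (X * N')"
    if M': "M' \<in> carrier_mat n p'" and N': "N' \<in> carrier_mat n q'"
      and sub: "col_range M' \<subseteq> col_range N'" for M' N' p' q'
  proof -
    obtain Y where Y: "Y \<in> carrier_mat q' p'" and "M' = N' * Y"
      using col_range_subset_imp_factor[OF M' N' sub] .
    then have "X * M' = X * N' * Y" using X N' by (simp add: assoc_mult_mat)
    then show ?thesis using col_range_mult_subset[OF _ Y] X N' by (metis mult_carrier_mat)
  qed
  show ?thesis using mono[OF M N] mono[OF N M] eq by blast
qed

lemma hcat_carrier:
  "A \<in> carrier_mat m p \<Longrightarrow> B \<in> carrier_mat m p' \<Longrightarrow> hcat A B \<in> carrier_mat m (p + p')"
  unfolding hcat_def by simp

lemma row_hcat: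
  assumes "A \<in> carrier_mat m p" "B \<in> carrier_mat m p'" "i < m"
  shows "row (hcat A B) i = row A i @\<^sub>v row B i"
  using assms unfolding hcat_def by (intro eq_vecI) auto

lemma hcat_mult_append:
  assumes A: "A \<in> carrier_mat m p" and B: "B \<in> carrier_mat m p'"
    and v: "v \<in> carrier_vec p" and w: "w \<in> carrier_vec p'"
  shows "hcat A B *\<^sub>v (v @\<^sub>v w) = A *\<^sub>v v + B *\<^sub>v w"
proof (rule eq_vecI)
  fix i assume "i < dim_vec (A *\<^sub>v v + B *\<^sub>v w)"
  then have i: "i < m" using B by simp
  have "(hcat A B *\<^sub>v (v @\<^sub>v w)) $ i = (row A i @\<^sub>v row B i) \<bullet> (v @\<^sub>v w)"
    using hcat_carrier[OF A B] row_hcat[OF A B i] i by simp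
  also have "\<dots> = row A i \<bullet> v + row B i \<bullet> w"
    using A B v w i by (intro scalar_prod_append) auto
  finally show "(hcat A B *\<^sub>v (v @\<^sub>v w)) $ i = (A *\<^sub>v v + B *\<^sub>v w) $ i" using A B i by simp
qed (use hcat_carrier[OF A B] B in simp)

lemma mult_mat_vec_eq_0_if_rows_subset:
  assumes sub: "set (rows A') \<subseteq> set (rows A)" and Av: "A *\<^sub>v v = 0\<^sub>v (dim_row A)"
  shows "A' *\<^sub>v v = 0\<^sub>v (dim_row A')"
proof (rule eq_vecI)
  fix i assume "i < dim_vec (0\<^sub>v (dim_row A'))"
  then have i: "i < dim_row A'" by simp
  then have "row A' i \<in> set (rows A)" using sub unfolding rows_def by auto
  then obtain i' where "i' < dim_row A" "row A' i = row A i'" unfolding rows_def by auto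
  then show "(A' *\<^sub>v v) $ i = 0\<^sub>v (dim_row A') $ i"
    using Av i by (metis index_mult_mat_vec index_zero_vec(1))
qed simp

lemma full_col_rank_if_hcat_rows_subset:
  assumes A': "A' \<in> carrier_mat m' n" and B': "B' \<in> carrier_mat m' n'"
    and A: "A \<in> carrier_mat m n" and B: "B \<in> carrier_mat m n'"
    and sub: "set (rows (hcat A' B')) \<subseteq> set (rows (hcat A B))"
  shows "full_col_rank A' \<Longrightarrow> full_col_rank A" and "full_col_rank B' \<Longrightarrow> full_col_rank B"
proof -
  have kernel: "A' *\<^sub>v v + B' *\<^sub>v w = 0\<^sub>v m'"
    if v: "v \<in> carrier_vec n" and w: "w \<in> carrier_vec n'" and "A *\<^sub>v v + B *\<^sub>v w = 0\<^sub>v m" for v w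
    using mult_mat_vec_eq_0_if_rows_subset[OF sub, of "v @\<^sub>v w"] that
      hcat_mult_append[OF A B v w] hcat_mult_append[OF A' B' v w] hcat_carrier[OF A B]
      hcat_carrier[OF A' B']
    by simp
  show "full_col_rank A" if fA': "full_col_rank A'"
  proof (rule full_col_rankI[OF A])
    fix v assume v: "v \<in> carrier_vec n" and "A *\<^sub>v v = 0\<^sub>v m"
    then have "A' *\<^sub>v v + B' *\<^sub>v 0\<^sub>v n' = 0\<^sub>v m'"
      using kernel[of v "0\<^sub>v n'"] mult_mat_vec_zero_vec[OF B] by simp
    then have "A' *\<^sub>v v = 0\<^sub>v m'" using A' v mult_mat_vec_zero_vec[OF B'] by simp
    then show "v = 0\<^sub>v n" using full_col_rankD[OF fA' A' v] by simp
  qed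
  show "full_col_rank B" if fB': "full_col_rank B'"
  proof (rule full_col_rankI[OF B])
    fix w assume w: "w \<in> carrier_vec n'" and "B *\<^sub>v w = 0\<^sub>v m"
    then have "A' *\<^sub>v 0\<^sub>v n + B' *\<^sub>v w = 0\<^sub>v m'"
      using kernel[of "0\<^sub>v n" w] mult_mat_vec_zero_vec[OF A] by simp
    then have "B' *\<^sub>v w = 0\<^sub>v m'" using B' w mult_mat_vec_zero_vec[OF A'] by simp
    then show "w = 0\<^sub>v n'" using full_col_rankD[OF fB' B' w] by simp
  qed
qed

lemma top_rows_mult_vec:
  assumes Z: "Z \<in> carrier_mat (p + p') r" and u: "u \<in> carrier_vec r"
  shows "top_rows p Z *\<^sub>v u = vec_first (Z *\<^sub>v u) p"
proof (rule eq_vecI)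
  fix i assume "i < dim_vec (vec_first (Z *\<^sub>v u) p)"
  then have i: "i < p" by simp
  have "row (top_rows p Z) i = row Z i" using i Z unfolding top_rows_def by (intro eq_vecI) auto
  then show "(top_rows p Z *\<^sub>v u) $ i = vec_first (Z *\<^sub>v u) p $ i"
    using i Z unfolding vec_first_def by (simp add: top_rows_def)
qed (simp add: top_rows_def)

lemma mat_kernel_hcat:
  assumes A: "A \<in> carrier_mat m p" and B: "B \<in> carrier_mat m p'"
    and z: "z \<in> mat_kernel (hcat A B)"
  shows "A *\<^sub>v vec_first z p + B *\<^sub>v vec_last z p' = 0\<^sub>v m"
proof -
  have "z \<in> carrier_vec (p + p')" and "hcat A B *\<^sub>v z = 0\<^sub>v m"
    using mat_kernelD[OF hcat_carrier[OF A B] z] by auto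
  then show ?thesis
    using hcat_mult_append[OF A B] by (metis vec_first_carrier vec_last_carrier vec_first_last_append)
qed

lemma full_col_rank_top_rows_kernel_basis:
  assumes A: "A \<in> carrier_mat m p" and B: "B \<in> carrier_mat m p'" and fB: "full_col_rank B"
    and Z: "is_basis_of (p + p') Z (mat_kernel (hcat A B))"
  shows "full_col_rank (top_rows p Z)"
proof -
  have Zc: "Z \<in> carrier_mat (p + p') (dim_col Z)" and fZ: "full_col_rank Z"
    and ZK: "col_range Z = mat_kernel (hcat A B)"
    using Z unfolding is_basis_of_def by auto
  have T: "top_rows p Z \<in> carrier_mat p (dim_col Z)" by (simp add: top_rows_def)
  show ?thesis
  proof (rule full_col_rankI[OF T])
    fix u assume u: "u \<in> carrier_vec (dim_col Z)" and "top_rows p Z *\<^sub>v u = 0\<^sub>v p"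
    then have first: "vec_first (Z *\<^sub>v u) p = 0\<^sub>v p" using top_rows_mult_vec[OF Zc u] by simp
    have "Z *\<^sub>v u \<in> col_range Z" using u unfolding col_range_def by blast
    then have "A *\<^sub>v vec_first (Z *\<^sub>v u) p + B *\<^sub>v vec_last (Z *\<^sub>v u) p' = 0\<^sub>v m"
      unfolding ZK by (rule mat_kernel_hcat[OF A B])
    then have "B *\<^sub>v vec_last (Z *\<^sub>v u) p' = 0\<^sub>v m"
      using first mult_mat_vec_zero_vec[OF A] B by simp
    then have last: "vec_last (Z *\<^sub>v u) p' = 0\<^sub>v p'"
      using full_col_rankD[OF fB B] by simp
    have "Z *\<^sub>v u \<in> carrier_vec (p + p')" using Zc u by (rule mult_mat_vec_carrier)
    then have "Z *\<^sub>v u = vec_first (Z *\<^sub>v u) p @\<^sub>v vec_last (Z *\<^sub>v u) p'"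
      by (rule vec_first_last_append[symmetric])
    also have "\<dots> = 0\<^sub>v (p + p')" unfolding first last by (rule eq_vecI) auto
    finally show "u = 0\<^sub>v (dim_col Z)" using full_col_rankD[OF fZ Zc u] by simp
  qed
qed

lemma col_range_eq_if_wide_kernel:
  assumes A: "A \<in> carrier_mat m p" and B: "B \<in> carrier_mat m p"
    and fA: "full_col_rank A" and fB: "full_col_rank B"
    and Z: "is_basis_of (p + p) Z (mat_kernel (hcat A B))" and wide: "p \<le> dim_col Z"
  shows "col_range A = col_range B"
proof -
  let ?T = "top_rows p Z"
  have ZK: "col_range Z = mat_kernel (hcat A B)" using Z unfolding is_basis_of_def by auto
  have "dim_row Z = p + p" using Z unfolding is_basis_of_def by auto
  have fT: "full_col_rank ?T" using full_col_rank_top_rows_kernel_basis[OF A B fB Z] .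
  moreover have "?T \<in> carrier_mat p (dim_col Z)" by (simp add: top_rows_def)
  ultimately have "dim_col Z \<le> p" by (rule full_col_rank_imp_cols_le[rotated])
  with wide have "dim_col Z = p" by simp
  then have Zc: "Z \<in> carrier_mat (p + p) p" and T: "?T \<in> carrier_mat p p"
    using \<open>dim_row Z = p + p\<close> by (auto simp: top_rows_def)
  have "col_range A \<subseteq> col_range B"
  proof
    fix x assume "x \<in> col_range A"
    then obtain u where u: "u \<in> carrier_vec p" "x = A *\<^sub>v u" using A unfolding col_range_def by auto
    \<comment> \<open>?T is square and injective, so u is the top half of a kernel vector Z w\<close>
    obtain w where w: "w \<in> carrier_vec p" "?T *\<^sub>v w = u"
      using full_col_rank_square_surj[OF T fT u(1)] .
    let ?y = "vec_last (Z *\<^sub>v w) p"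
    have "Z *\<^sub>v w \<in> col_range Z" using w Zc unfolding col_range_def by auto
    then have "A *\<^sub>v vec_first (Z *\<^sub>v w) p + B *\<^sub>v ?y = 0\<^sub>v m"
      unfolding ZK by (rule mat_kernel_hcat[OF A B])
    then have sum: "x + B *\<^sub>v ?y = 0\<^sub>v m"
      using top_rows_mult_vec[OF Zc w(1)] w(2) u(2) by simp
    have "x = B *\<^sub>v (- ?y)"
    proof (rule eq_vecI)
      fix i assume "i < dim_vec (B *\<^sub>v (- ?y))"
      then have i: "i < m" using B by simp
      have "x $ i + (B *\<^sub>v ?y) $ i = 0"
        using arg_cong[OF sum, of "\<lambda>v. v $ i"] i B by simp
      then show "x $ i = (B *\<^sub>v (- ?y)) $ i" using i B by simp
    qed (use u A B in simp)
    then show "x \<in> col_range B" using B unfolding col_range_def by fastforce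
  qed
  then show ?thesis using col_range_eq_if_subset[OF A B fA] by simp
qed

lemma ssd_run_invariant:
  assumes "ssd_run A B C Out"
    and "A0 \<in> carrier_mat m q" "B0 \<in> carrier_mat m q" "C \<in> carrier_mat q p"
    and "A = A0 * C" "B = B0 * C"
    and "full_col_rank A" "full_col_rank B" "full_col_rank C"
  shows "dim_row Out = q \<and> full_col_rank Out \<and> col_range (A0 * Out) = col_range (B0 * Out)"
  using assms
proof (induction arbitrary: p rule: ssd_run.induct)
  case (trivial A B C)
  have "A0 * 0\<^sub>m q 0 = B0 * 0\<^sub>m q 0" using trivial.prems(1,2) by (intro eq_matI) auto
  then show ?case using trivial.prems(3) full_col_rank_zero_cols by simp
next
  case (stop A B Z C)
  have A: "A \<in> carrier_mat m p" and B: "B \<in> carrier_mat m p" using stop.prems by auto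
  have "col_range A = col_range B"
    using col_range_eq_if_wide_kernel[OF A B] stop.hyps stop.prems A by simp
  then show ?case using stop.prems by simp
next
  case (step A B Z C Out)
  have A: "A \<in> carrier_mat m p" and B: "B \<in> carrier_mat m p" and C: "C \<in> carrier_mat q p"
    using step.prems by auto
  let ?T = "top_rows p Z"
  have T: "?T \<in> carrier_mat p (dim_col Z)" by (simp add: top_rows_def)
  have fT: "full_col_rank ?T"
    using full_col_rank_top_rows_kernel_basis[OF A B _] step.hyps(2) step.prems A by simp
  have "top_rows (dim_col A) Z = ?T" using A by simp
  note IH = step.IH[unfolded this]
  show ?case
  proof (rule IH)
    show "A0 \<in> carrier_mat m q" "B0 \<in> carrier_mat m q" "C * ?T \<in> carrier_mat q (dim_col Z)"
      using step.prems C T by auto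
    show "A * ?T = A0 * (C * ?T)" "B * ?T = B0 * (C * ?T)"
      using step.prems(1,2,4,5) assoc_mult_mat[OF _ C T] by simp_all
    show "full_col_rank (A * ?T)" "full_col_rank (B * ?T)" "full_col_rank (C * ?T)"
      using full_col_rank_mult[OF A T] full_col_rank_mult[OF B T] full_col_rank_mult[OF C T]
        step.prems(6-8) fT by simp_all
  qed
qed

lemma is_SSD_output:
  assumes A: "A \<in> carrier_mat m q" and B: "B \<in> carrier_mat m q"
    and fA: "full_col_rank A" and fB: "full_col_rank B" and E: "is_SSD A B E"
  shows "E \<in> carrier_mat q (dim_col E)" "full_col_rank E" "col_range (A * E) = col_range (B * E)"
proof -
  have "ssd_run A B (1\<^sub>m q) E" using E A unfolding is_SSD_def by simp
  from ssd_run_invariant[OF this A B one_carrier_mat _ _ fA fB full_col_rank_one_mat]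
  show "E \<in> carrier_mat q (dim_col E)" "full_col_rank E" "col_range (A * E) = col_range (B * E)"
    using A B by (auto intro: carrier_matI)
qed

lemma pssd_candidate:
  assumes DX: "DX \<in> carrier_mat r n" and DY: "DY \<in> carrier_mat r n"
    and fDX: "full_col_rank DX" and fDY: "full_col_rank DY"
    and D: "is_basis_of n D S" and S: "S \<subseteq> col_range C"
    and E: "is_SSD (DX * D) (DY * D) E"
  shows "D * E \<in> carrier_mat n (dim_col E)" "full_col_rank (D * E)"
    "col_range (D * E) \<subseteq> col_range C"
    "col_range (DX * (D * E)) = col_range (DY * (D * E))"
proof -
  have Dc: "D \<in> carrier_mat n (dim_col D)" and fD: "full_col_rank D" and DS: "col_range D = S"
    using D unfolding is_basis_of_def by auto
  note SSD = is_SSD_output[OF mult_carrier_mat[OF DX Dc] mult_carrier_mat[OF DY Dc]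
      full_col_rank_mult[OF DX Dc fDX fD] full_col_rank_mult[OF DY Dc fDY fD] E]
  show "D * E \<in> carrier_mat n (dim_col E)" using mult_carrier_mat[OF Dc SSD(1)] .
  show "full_col_rank (D * E)" using full_col_rank_mult[OF Dc SSD(1) fD SSD(2)] .
  show "col_range (D * E) \<subseteq> col_range C" using col_range_mult_subset[OF Dc SSD(1)] DS S by simp
  show "col_range (DX * (D * E)) = col_range (DY * (D * E))"
    using SSD(3) assoc_mult_mat[OF DX Dc SSD(1)] assoc_mult_mat[OF DY Dc SSD(1)] by simp
qed

lemma pssd_update:
  assumes DX: "DX \<in> carrier_mat r n" and DY: "DY \<in> carrier_mat r n"
    and C: "C \<in> carrier_mat n c" and fC: "full_col_rank C"
    and F: "F \<in> carrier_mat n f" and fF: "full_col_rank F"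
    and FC: "col_range F \<subseteq> col_range C" and FXY: "col_range (DX * F) = col_range (DY * F)"
    and C': "C' = (if dim_col F < dim_col C then F else C)"
  shows "C' \<in> carrier_mat n (dim_col C')" "full_col_rank C'"
    "col_range F = col_range C'" "col_range (DX * C') = col_range (DY * C')"
proof -
  have "C' \<in> carrier_mat n (dim_col C') \<and> full_col_rank C' \<and>
    col_range F = col_range C' \<and> col_range (DX * C') = col_range (DY * C')"
  proof (cases "dim_col F < dim_col C")
    case True
    then have "C' = F" using C' by simp
    then show ?thesis using F fF FXY by auto
  next
    case False
    then have C'C: "C' = C" and "c \<le> f" using C' C F by auto
    then have FC_eq: "col_range F = col_range C" using col_range_eq_if_subset[OF F C fF FC] by simp
    have "col_range (DX * C) = col_range (DX * F)"
      using col_range_mult_left_cong[OF DX C F] FC_eq by simp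
    also have "\<dots> = col_range (DY * F)" by (rule FXY)
    also have "\<dots> = col_range (DY * C)" using col_range_mult_left_cong[OF DY F C] FC_eq by simp
    finally show ?thesis using C'C C fC FC_eq by auto
  qed
  then show "C' \<in> carrier_mat n (dim_col C')" "full_col_rank C'"
    "col_range F = col_range C'" "col_range (DX * C') = col_range (DY * C')"
    by auto
qed

lemma pssd_step:
  assumes DX: "DX \<in> carrier_mat r n" and DY: "DY \<in> carrier_mat r n"
    and fDX: "full_col_rank DX" and fDY: "full_col_rank DY"
    and C: "C \<in> carrier_mat n (dim_col C)" and fC: "full_col_rank C"
    and D: "is_basis_of n D S" and S: "S \<subseteq> col_range C"
    and E: "is_SSD (DX * D) (DY * D) E"
    and C': "C' = (if dim_col (D * E) < dim_col C then D * E else C)"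
  shows "C' \<in> carrier_mat n (dim_col C')" "full_col_rank C'"
    "col_range (D * E) = col_range C'" "col_range (DX * C') = col_range (DY * C')"
  using pssd_update[OF DX DY C fC pssd_candidate[OF DX DY fDX fDY D S E] C'] by blast+

theorem theorem4p5:
  fixes Nd N M :: nat
    and DXg DYg DXs DYs :: "real mat"
    and DX DY :: "nat \<Rightarrow> real mat"
    and G :: "nat \<Rightarrow> (nat \<times> nat) set"
    and C Dk Ek :: "nat \<Rightarrow> nat \<Rightarrow> real mat"
  assumes global: "DXg \<in> carrier_mat N Nd" "DYg \<in> carrier_mat N Nd"
      and global_rank: "full_col_rank DXg" "full_col_rank DYg"
      and local_dims: "\<And>i. i \<in> {1..M} \<Longrightarrow> dim_col (DX i) = Nd \<and> dim_col (DY i) = Nd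
                                   \<and> dim_row (DY i) = dim_row (DX i)"
      and local_union: "(\<Union>i\<in>{1..M}. set (rows (hcat (DX i) (DY i)))) = set (rows (hcat DXg DYg))"
      and sig_dims: "dim_col DXs = Nd" "dim_col DYs = Nd" "dim_row DYs = dim_row DXs"
      and sig_rank: "full_col_rank DXs" "full_col_rank DYs"
      and sig_in: "\<And>i. i \<in> {1..M} \<Longrightarrow> set (rows (hcat DXs DYs)) \<subseteq> set (rows (hcat (DX i) (DY i)))"
      and graphs: "\<And>k. G k \<subseteq> {1..M} \<times> {1..M}"
      and init: "\<And>i. i \<in> {1..M} \<Longrightarrow> C 0 i = 1\<^sub>m Nd"
      and D_step: "\<And>k i. k \<ge> 1 \<Longrightarrow> i \<in> {1..M} \<Longrightarrow>
          is_basis_of Nd (Dk k i)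
            (\<Inter>j \<in> insert i (in_nbrs (G k) i). col_range (C (k - 1) j))"
      and E_step: "\<And>k i. k \<ge> 1 \<Longrightarrow> i \<in> {1..M} \<Longrightarrow>
          is_SSD (DX i * Dk k i) (DY i * Dk k i) (Ek k i)"
      and C_step: "\<And>k i. k \<ge> 1 \<Longrightarrow> i \<in> {1..M} \<Longrightarrow>
          C k i = (if dim_col (Dk k i * Ek k i) < dim_col (C (k - 1) i)
                   then Dk k i * Ek k i else C (k - 1) i)"
      and agent: "i \<in> {1..M}"
  shows "(\<forall>k. C k i = 0\<^sub>m Nd 0 \<or> full_col_rank (C k i))
       \<and> (\<forall>k\<ge>1. col_range (Dk k i * Ek k i) = col_range (C k i))
       \<and> (\<forall>k\<ge>1. col_range (DX i * C k i) = col_range (DY i * C k i))"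
proof -
  have DX: "DX i \<in> carrier_mat (dim_row (DX i)) Nd" and DY: "DY i \<in> carrier_mat (dim_row (DX i)) Nd"
    using local_dims[OF agent] by (auto intro: carrier_matI)
  have DXs: "DXs \<in> carrier_mat (dim_row DXs) Nd" and DYs: "DYs \<in> carrier_mat (dim_row DXs) Nd"
    using sig_dims by (auto intro: carrier_matI)
  note signature = full_col_rank_if_hcat_rows_subset[OF DXs DYs DX DY sig_in[OF agent]]
  have fDX: "full_col_rank (DX i)" and fDY: "full_col_rank (DY i)"
    using signature sig_rank by blast+
  have step: "C k i \<in> carrier_mat Nd (dim_col (C k i)) \<and> full_col_rank (C k i)
      \<and> col_range (Dk k i * Ek k i) = col_range (C k i)
      \<and> col_range (DX i * C k i) = col_range (DY i * C k i)"
    if k: "k \<ge> 1" and prev: "C (k - 1) i \<in> carrier_mat Nd (dim_col (C (k - 1) i))"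
      "full_col_rank (C (k - 1) i)" for k
    using pssd_step[OF DX DY fDX fDY prev D_step[OF k agent] INF_lower[OF insertI1]
        E_step[OF k agent] C_step[OF k agent]]
    by blast
  \<comment> \<open>a matrix without columns has full column rank\<close>
  have C: "C k i \<in> carrier_mat Nd (dim_col (C k i)) \<and> full_col_rank (C k i)" for k
  proof (induction k)
    case 0
    show ?case using init[OF agent] full_col_rank_one_mat by simp
  next
    case (Suc k)
    then show ?case using step[of "Suc k"] by simp
  qed
  have "col_range (Dk k i * Ek k i) = col_range (C k i)
      \<and> col_range (DX i * C k i) = col_range (DY i * C k i)" if "k \<ge> 1" for k
    using step[OF that] C[of "k - 1"] by blast
  with C show ?thesis by blast
qed

end
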